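(* Let $m\ge1$ and $n\ge0$, and let $\phi$ be an $r$-simplex of $(\Delta^1)^{m+n}$, viewed as a function $\phi\colon\{1,\dots,m+n\}\to\{1,\dots,r,\pm\infty\}$, which is unmarked in $(\Delta^1)^{\otimes(m+n)}$. Then $\phi$ is marked in $T(\widetilde\square^m)\otimes T(\square^n)=(\Delta^1)^{\otimes m}_e\otimes(\Delta^1)^{\otimes n}$ if and only if: (1) $r\ge m$; (2) $\phi(i)=i$ for all $1\le i\le m$; and (3) there does not exist a sequence $m<i_m<i_{m+1}<\dots<i_r\le m+n$ with $\phi(i_p)=p$ for all $m\le p\le r$.
   Context: An $r$-simplex of the simplicial set $(\Delta^1)^N=N([1]^N)$ is identified with the function $\phi\colon\{1,\dots,N\}\to\{1,\dots,r,\pm\infty\}$ defined by: $\phi(i)=+\infty$ if the $i$-th coordinate of the last vertex is $0$; $\phi(i)=p$ if the $i$-th coordinate of vertex $p-1$ is $0$ and of vertex $p$ is $1$; $\phi(i)=-\infty$ if the $i$-th coordinate of vertex $0$ is $1$ (this is a bijection). Marked simplicial sets have marked simplices of positive dimension containing all degenerate ones. Verity's Gray tensor $X\otimes Y$ has underlying $X\times Y$, with $(x,y)\in X_r\times Y_r$ marked iff for every $0\le i\le r$ the restriction of $x$ to vertices $\{0,\dots,i\}$ is marked or the restriction of $y$ to vertices $\{i,\dots,r\}$ is marked. $(\Delta^1)^{\otimes N}$ is the $N$-fold Gray tensor power of minimally marked $\Delta^1$; in it, an $r$-simplex $\phi$ is unmarked iff there exist $1\le i_1<\dots<i_r\le N$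 with $\phi(i_p)=p$ for all $p$. $(\Delta^1)^{\otimes m}_e$ is $(\Delta^1)^{\otimes m}$ with additionally the $m$-simplex $\iota_m$ (given by $\iota_m(i)=i$) marked. Here $(\Delta^1)^{\otimes m}_e\otimes(\Delta^1)^{\otimes n}$ is identified with a marking on $(\Delta^1)^{m+n}$ via $(\Delta^1)^m\times(\Delta^1)^n=(\Delta^1)^{m+n}$, the first $m$ coordinates coming from the first factor. *)

theory Defs
  imports Main
begin

text \<open>
  An r-simplex of (Delta^1)^N = N([1]^N) is a chain of vertices v_0 <= ... <= v_r in {0,1}^N.
  We represent it by  v :: nat => nat => bool, where  v p i  is the i-th coordinate
  (1 <= i <= N) of vertex p (0 <= p <= r); outside this range v is False.
  A marking on the family of products (Delta^1)^N is a predicate on (r, v).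
\<close>

type_synonym simp = "nat \<Rightarrow> nat \<Rightarrow> bool"
type_synonym marking = "nat \<Rightarrow> simp \<Rightarrow> bool"

definition simplex :: "nat \<Rightarrow> nat \<Rightarrow> simp \<Rightarrow> bool" where
  "simplex N r v \<longleftrightarrow>
     (\<forall>p i. v p i \<longrightarrow> p \<le> r \<and> 1 \<le> i \<and> i \<le> N) \<and>
     (\<forall>p q i. p \<le> q \<and> q \<le> r \<and> v p i \<longrightarrow> v q i)"

definition restr :: "nat \<Rightarrow> nat \<Rightarrow> simp \<Rightarrow> simp" where
  "restr a b v = (\<lambda>p i. p \<le> b - a \<and> v (a + p) i)"

definition left_part :: "nat \<Rightarrow> simp \<Rightarrow> simp" where
  "left_part m v = (\<lambda>p i. i \<le> m \<and> v p i)"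

definition right_part :: "nat \<Rightarrow> simp \<Rightarrow> simp" where
  "right_part m v = (\<lambda>p i. 1 \<le> i \<and> v p (m + i))"

text \<open>Verity's Gray tensor X (x) Y, with X a marking on (Delta^1)^m, Y on (Delta^1)^n,
  giving a marking on (Delta^1)^(m+n) (first m coordinates from X).\<close>
definition gray :: "marking \<Rightarrow> nat \<Rightarrow> marking \<Rightarrow> marking" where
  "gray MX m MY r v \<longleftrightarrow>
     (\<forall>i\<le>r. MX i (restr 0 i (left_part m v)) \<or> MY (r - i) (restr i r (right_part m v)))"

text \<open>Minimally marked Delta^1: marked = degenerate of positive dimension.\<close>
definition degenerate :: "nat \<Rightarrow> simp \<Rightarrow> bool" where
  "degenerate r v \<longleftrightarrow> (\<exists>p<r. \<forall>i. v p i = v (Suc p) i)"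

definition delta1_min :: marking where
  "delta1_min r v \<longleftrightarrow> 1 \<le> r \<and> degenerate r v"

text \<open>N-fold Gray tensor power; the 0-fold power is the unit Delta^0 (all simplices
  of positive dimension are degenerate, hence marked).\<close>
fun gray_pow :: "nat \<Rightarrow> marking" where
  "gray_pow 0 = (\<lambda>r v. 1 \<le> r)"
| "gray_pow (Suc k) = gray (gray_pow k) k delta1_min"

text \<open>The m-simplex iota_m: iota_m(i) = i, i.e. coordinate i of vertex p is 1 iff i <= p.\<close>
definition iota :: "nat \<Rightarrow> simp" where
  "iota m = (\<lambda>p i. 1 \<le> i \<and> i \<le> p \<and> p \<le> m)"

definition gray_pow_e :: "nat \<Rightarrow> marking" where
  "gray_pow_e m r v \<longleftrightarrow> gray_pow m r v \<or> (r = m \<and> v = iota m)"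

datatype ext = NegInf | Fin nat | PosInf

definition phi :: "nat \<Rightarrow> simp \<Rightarrow> nat \<Rightarrow> ext" where
  "phi r v i = (if \<not> v r i then PosInf else if v 0 i then NegInf
                else Fin (LEAST p. v p i))"

end

theory Submission
  imports Defs
begin

text \<open>An \<open>r\<close>-simplex \<open>\<phi>\<close> is unmarked in a Gray power exactly when some coordinates
  \<open>j\<^sub>1 < \<dots> < j\<^sub>r\<close> satisfy \<open>\<phi>(j\<^sub>p) = p\<close>, and this chain condition is compatible with
  restricting and shifting faces, so markings of Gray tensor products are read off from chains.
  For unmarked \<open>\<phi>\<close> such a chain exists and changes from coordinates \<open>\<le> m\<close> to coordinates
  \<open>> m\<close> after some step \<open>k\<close>, giving chains on both sides of the split at \<open>k\<close>. So \<open>\<phi>\<close> can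
  only be marked if \<open>k = m\<close> and the left face is the extra marked simplex \<open>\<iota>\<^sub>m\<close>, i.e.
  \<open>\<phi>(i) = i\<close> for \<open>i \<le> m\<close>. The splits at \<open>i < m\<close> then have a left chain, and they are
  all blocked iff no chain of coordinates \<open>> m\<close> covers the steps \<open>m, \<dots>, r\<close>.\<close>

text \<open>\<open>jump_chain J a b c d\<close> holds iff there are \<open>a < j\<^sub>c\<^sub>+\<^sub>1 < \<dots> < j\<^sub>d \<le> b\<close> with
  \<open>J j\<^sub>p p\<close> for all \<open>c < p \<le> d\<close>; the recursion decides whether \<open>b\<close> serves as \<open>j\<^sub>d\<close>.\<close>
fun jump_chain :: "(nat \<Rightarrow> nat \<Rightarrow> bool) \<Rightarrow> nat \<Rightarrow> nat \<Rightarrow> nat \<Rightarrow> nat \<Rightarrow> bool" where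
  "jump_chain J a 0 c d \<longleftrightarrow> d \<le> c"
| "jump_chain J a (Suc b) c d \<longleftrightarrow>
     d \<le> c \<or> (a < Suc b \<and> (jump_chain J a b c d \<or> (J (Suc b) d \<and> jump_chain J a b c (d - 1))))"

lemma jump_chain_trivial: "d \<le> c \<Longrightarrow> jump_chain J a b c d"
  by (cases b) auto

lemma jump_chain_below_start: "b \<le> a \<Longrightarrow> jump_chain J a b c d \<longleftrightarrow> d \<le> c"
  by (induction b) auto

lemma jump_chain_mono_upper: "jump_chain J a b c d \<Longrightarrow> b \<le> b' \<Longrightarrow> jump_chain J a b' c d"
proof (induction b')
  case (Suc b')
  show ?case
  proof (cases "b = Suc b'")
    case False
    with Suc have "jump_chain J a b' c d" by simp
    then show ?thesis by (cases "b' < a") (auto simp: jump_chain_below_start jump_chain_trivial)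
  qed (use Suc in simp)
qed simp

lemma jump_chain_mono_lower: "jump_chain J a b c d \<Longrightarrow> c \<le> c' \<Longrightarrow> jump_chain J a b c' d"
  by (induction b arbitrary: d) auto

lemma jump_chain_length: "jump_chain J a b c d \<Longrightarrow> d \<le> c + (b - a)"
proof (induction b arbitrary: d)
  case (Suc b)
  show ?case
  proof (cases "d \<le> c")
    case False
    with Suc.prems have "a < Suc b" "jump_chain J a b c d \<or> jump_chain J a b c (d - 1)" by auto
    then show ?thesis using Suc.IH[of d] Suc.IH[of "d - 1"] by auto
  qed simp
qed simp

lemma jump_chain_cong:
  assumes "\<And>j p. a < j \<Longrightarrow> j \<le> b \<Longrightarrow> c < p \<Longrightarrow> p \<le> d \<Longrightarrow> J j p = J' j p"
  shows "jump_chain J a b c d = jump_chain J' a b c d"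
  using assms
proof (induction b arbitrary: d)
  case (Suc b)
  have "jump_chain J a b c d' = jump_chain J' a b c d'" if "d' \<le> d" for d'
    using that by (intro Suc.IH) (rule Suc.prems, auto)
  moreover have "c < d \<Longrightarrow> a < Suc b \<Longrightarrow> J (Suc b) d = J' (Suc b) d"
    by (rule Suc.prems) auto
  ultimately show ?case by (cases "d \<le> c") auto
qed simp

lemma jump_chain_shift:
  "jump_chain J (a + f) (b + f) (c + e) (d + e) = jump_chain (\<lambda>j p. J (j + f) (p + e)) a b c d"
proof (induction b arbitrary: d)
  case (Suc b)
  show ?case
  proof (cases "d \<le> c")
    case False
    then have "d + e - 1 = (d - 1) + e" by simp
    then show ?thesis using Suc.IH[of d] Suc.IH[of "d - 1"] False by simp
  qed (simp add: jump_chain_trivial)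
qed (simp add: jump_chain_below_start)

lemma jump_chain_split:
  assumes "jump_chain J a b c d" "a \<le> mid" "mid \<le> b" "c \<le> d"
  shows "\<exists>k. c \<le> k \<and> k \<le> d \<and> jump_chain J a mid c k \<and> jump_chain J mid b k d"
  using assms
proof (induction b arbitrary: d)
  case 0
  then show ?case by (intro exI[of _ d]) (auto simp: jump_chain_trivial)
next
  case (Suc b)
  consider "mid = Suc b" | "d \<le> c" | "mid \<le> b" "jump_chain J a b c d"
    | "mid \<le> b" "c < d" "J (Suc b) d" "jump_chain J a b c (d - 1)"
    using Suc.prems by fastforce
  then show ?case
  proof cases
    case 1
    then show ?thesis using Suc.prems by (intro exI[of _ d]) (auto simp: jump_chain_trivial)
  next
    case 2
    then show ?thesis using Suc.prems by (intro exI[of _ c]) (auto simp: jump_chain_trivial)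
  next
    case 3
    with Suc obtain k where "c \<le> k" "k \<le> d" "jump_chain J a mid c k" "jump_chain J mid b k d"
      by blast
    then show ?thesis using jump_chain_mono_upper[of J mid b k d "Suc b"] by auto
  next
    case 4
    then have "c \<le> d - 1" by simp
    with 4 Suc.IH Suc.prems obtain k where "c \<le> k" "k \<le> d - 1" "jump_chain J a mid c k" "jump_chain J mid b k (d - 1)"
      by auto
    then show ?thesis using 4 by (intro exI[of _ k]) auto
  qed
qed

lemma jump_chain_diagonal: "(\<And>p. 1 \<le> p \<Longrightarrow> p \<le> d \<Longrightarrow> J p p) \<Longrightarrow> jump_chain J 0 d 0 d"
  by (induction d) auto

lemma jump_chain_Suc_from_zero:
  "jump_chain J 0 (Suc k) 0 r \<longleftrightarrow>
     (\<exists>i\<le>r. jump_chain J 0 k 0 i \<and> r < i + 2 \<and> (i + 1 = r \<longrightarrow> J (Suc k) r))"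
proof (cases r)
  case (Suc r')
  have "(\<exists>i\<le>r. jump_chain J 0 k 0 i \<and> r < i + 2 \<and> (i + 1 = r \<longrightarrow> J (Suc k) r)) \<longleftrightarrow>
        jump_chain J 0 k 0 r \<or> (jump_chain J 0 k 0 r' \<and> J (Suc k) r)"
  proof
    assume "\<exists>i\<le>r. jump_chain J 0 k 0 i \<and> r < i + 2 \<and> (i + 1 = r \<longrightarrow> J (Suc k) r)"
    then obtain i where "i \<le> r" "r < i + 2" "jump_chain J 0 k 0 i" "i + 1 = r \<longrightarrow> J (Suc k) r"
      by blast
    moreover from \<open>i \<le> r\<close> \<open>r < i + 2\<close> Suc have "i = r \<or> i = r'" by linarith
    ultimately show "jump_chain J 0 k 0 r \<or> (jump_chain J 0 k 0 r' \<and> J (Suc k) r)"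
      using Suc by auto
  next
    assume "jump_chain J 0 k 0 r \<or> (jump_chain J 0 k 0 r' \<and> J (Suc k) r)"
    then show "\<exists>i\<le>r. jump_chain J 0 k 0 i \<and> r < i + 2 \<and> (i + 1 = r \<longrightarrow> J (Suc k) r)"
      using Suc by (elim disjE) (force intro!: exI[of _ r], force intro!: exI[of _ r'])
  qed
  then show ?thesis using Suc by auto
qed (auto simp: jump_chain_trivial)

lemma jump_chain_if_seq:
  assumes "c < d" "a < s (Suc c)" "s d \<le> b" "strict_mono_on {Suc c..d} s"
    and "\<forall>p\<in>{Suc c..d}. J (s p) p"
  shows "jump_chain J a b c d"
  using assms
proof (induction b arbitrary: d)
  case 0
  have "s (Suc c) \<le> s d"
    using 0 by (intro strict_mono_on_leD[OF \<open>strict_mono_on {Suc c..d} s\<close>]) auto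
  with 0 show ?case by simp
next
  case (Suc b)
  show ?case
  proof (cases "s d \<le> b")
    case True
    with Suc show ?thesis by (blast intro: jump_chain_mono_upper le_SucI)
  next
    case False
    with Suc.prems have sd: "s d = Suc b" by simp
    have "s (Suc c) \<le> s d"
      using Suc.prems by (intro strict_mono_on_leD[OF \<open>strict_mono_on {Suc c..d} s\<close>]) auto
    with Suc.prems sd have "a < Suc b" by simp
    moreover have "J (Suc b) d"
      using Suc.prems(1,5) sd by (metis Suc_leI atLeastAtMost_iff order_refl)
    moreover have "jump_chain J a b c (d - 1)"
    proof (cases "c < d - 1")
      case True
      have "s (d - 1) < s d"
        using True by (intro strict_mono_onD[OF \<open>strict_mono_on {Suc c..d} s\<close>]) auto
      moreover have "strict_mono_on {Suc c..d - 1} s"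
        by (rule monotone_on_subset[OF \<open>strict_mono_on {Suc c..d} s\<close>]) auto
      ultimately show ?thesis using True Suc by (intro Suc.IH) auto
    qed (simp add: jump_chain_trivial)
    ultimately show ?thesis by simp
  qed
qed

lemma seq_if_jump_chain:
  assumes "jump_chain J a b c d" "c < d"
  shows "\<exists>s. a < s (Suc c) \<and> s d \<le> b \<and> strict_mono_on {Suc c..d} s \<and> (\<forall>p\<in>{Suc c..d}. J (s p) p)"
  using assms
proof (induction b arbitrary: d)
  case (Suc b)
  consider "jump_chain J a b c d" | "a < Suc b" "J (Suc b) d" "jump_chain J a b c (d - 1)"
    using Suc.prems by auto
  then show ?case
  proof cases
    case 1
    with Suc show ?thesis by (meson le_SucI)
  next
    case 2
    show ?thesis
    proof (cases "c < d - 1")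
      case False
      with Suc.prems have "d = Suc c" by simp
      with 2 show ?thesis by (intro exI[of _ "\<lambda>_. Suc b"]) (auto intro: strict_mono_onI)
    next
      case True
      with 2 Suc.IH obtain s where s: "a < s (Suc c)" "s (d - 1) \<le> b" "strict_mono_on {Suc c..d - 1} s"
        "\<forall>p\<in>{Suc c..d - 1}. J (s p) p" by blast
      have "strict_mono_on {Suc c..d} (s(d := Suc b))"
      proof (rule strict_mono_onI)
        fix p q assume "p \<in> {Suc c..d}" "q \<in> {Suc c..d}" "p < q"
        moreover have "s p \<le> s (d - 1)" if "p \<in> {Suc c..d - 1}"
          using that True by (intro strict_mono_on_leD[OF s(3)]) auto
        ultimately show "(s(d := Suc b)) p < (s(d := Suc b)) q"
          using s(2) strict_mono_onD[OF s(3), of p q] by fastforce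
      qed
      moreover have "a < (s(d := Suc b)) (Suc c)" "(s(d := Suc b)) d \<le> Suc b"
        "\<forall>p\<in>{Suc c..d}. J ((s(d := Suc b)) p) p"
        using s 2 True by auto
      ultimately show ?thesis by blast
    qed
  qed
qed simp

lemma jump_chain_iff_seq:
  "c < d \<Longrightarrow> jump_chain J a b c d \<longleftrightarrow>
     (\<exists>s. a < s (Suc c) \<and> s d \<le> b \<and> strict_mono_on {Suc c..d} s \<and> (\<forall>p\<in>{Suc c..d}. J (s p) p))"
  using jump_chain_if_seq seq_if_jump_chain by metis

definition jumps_at :: "simp \<Rightarrow> nat \<Rightarrow> nat \<Rightarrow> bool" where
  "jumps_at v j p \<longleftrightarrow> v p j \<and> \<not> v (p - 1) j"

lemma simplex_mono: "simplex N r v \<Longrightarrow> p \<le> q \<Longrightarrow> q \<le> r \<Longrightarrow> v p i \<Longrightarrow> v q i"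
  unfolding simplex_def by blast

lemma simplex_bounds: "simplex N r v \<Longrightarrow> v p i \<Longrightarrow> p \<le> r \<and> 1 \<le> i \<and> i \<le> N"
  unfolding simplex_def by blast

lemma phi_eq_Fin_iff:
  assumes "simplex N r v" "1 \<le> p" "p \<le> r"
  shows "phi r v j = Fin p \<longleftrightarrow> jumps_at v j p"
proof
  assume "phi r v j = Fin p"
  then have "v r j" and "(LEAST q. v q j) = p"
    by (auto simp: phi_def split: if_splits)
  then show "jumps_at v j p"
    using LeastI[of "\<lambda>q. v q j"] not_less_Least[of "p - 1" "\<lambda>q. v q j"] \<open>1 \<le> p\<close>
    by (auto simp: jumps_at_def)
next
  assume "jumps_at v j p"
  then have vp: "v p j" and "\<not> v (p - 1) j" by (auto simp: jumps_at_def)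
  have not_before: "\<not> v q j" if "q < p" for q
    using simplex_mono[OF assms(1), of q "p - 1" j] that assms(3) \<open>\<not> v (p - 1) j\<close> by linarith
  have "(LEAST q. v q j) = p"
    using vp not_before by (intro Least_equality) (auto simp: not_less[symmetric])
  moreover have "v r j" using simplex_mono[OF assms(1) assms(3) order_refl vp] .
  ultimately show "phi r v j = Fin p"
    using not_before[of 0] assms(2) by (simp add: phi_def)
qed

lemma simplexI:
  assumes "\<And>p i. v p i \<Longrightarrow> p \<le> r \<and> 1 \<le> i \<and> i \<le> N"
    and "\<And>p q i. p \<le> q \<Longrightarrow> q \<le> r \<Longrightarrow> v p i \<Longrightarrow> v q i"
  shows "simplex N r v"
  using assms unfolding simplex_def by blast

lemma simplex_restr_left_part:
  assumes "simplex (m + n) r v" "i \<le> r"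
  shows "simplex m i (restr 0 i (left_part m v))"
proof (rule simplexI)
  fix p q j assume "p \<le> q" "q \<le> i" "restr 0 i (left_part m v) p j"
  then show "restr 0 i (left_part m v) q j"
    using simplex_mono[OF assms(1), of p q j] assms(2) by (simp add: restr_def left_part_def)
qed (use simplex_bounds[OF assms(1)] in \<open>auto simp: restr_def left_part_def\<close>)

lemma simplex_restr_right_part:
  assumes "simplex (m + n) r v" "i \<le> r"
  shows "simplex n (r - i) (restr i r (right_part m v))"
proof (rule simplexI)
  fix p q j assume "p \<le> q" "q \<le> r - i" "restr i r (right_part m v) p j"
  then show "restr i r (right_part m v) q j"
    using simplex_mono[OF assms(1), of "i + p" "i + q" "m + j"] assms(2) by (simp add: restr_def right_part_def)
next
  fix p j assume "restr i r (right_part m v) p j"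
  then show "p \<le> r - i \<and> 1 \<le> j \<and> j \<le> n"
    using simplex_bounds[OF assms(1), of "i + p" "m + j"] by (simp add: restr_def right_part_def)
qed

lemma jump_chain_restr_left_part:
  "jump_chain (jumps_at (restr 0 i (left_part m v))) 0 m 0 i = jump_chain (jumps_at v) 0 m 0 i"
  by (rule jump_chain_cong) (auto simp: jumps_at_def restr_def left_part_def)

lemma jump_chain_restr_right_part:
  assumes "i \<le> r"
  shows "jump_chain (jumps_at (restr i r (right_part m v))) 0 n 0 (r - i) =
         jump_chain (jumps_at v) m (m + n) i r"
proof -
  have "jump_chain (jumps_at v) (0 + m) (n + m) (0 + i) ((r - i) + i) =
        jump_chain (\<lambda>j p. jumps_at v (j + m) (p + i)) 0 n 0 (r - i)"
    by (rule jump_chain_shift)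
  also have "\<dots> = jump_chain (jumps_at (restr i r (right_part m v))) 0 n 0 (r - i)"
    using assms by (intro jump_chain_cong) (auto simp: jumps_at_def restr_def right_part_def add.commute)
  finally show ?thesis using assms by (simp add: add.commute)
qed

lemma delta1_min_iff:
  assumes "simplex 1 r w"
  shows "delta1_min r w \<longleftrightarrow> 2 \<le> r \<or> (r = 1 \<and> w 0 1 = w 1 1)"
proof -
  have "(\<forall>j. w p j = w (Suc p) j) \<longleftrightarrow> w p 1 = w (Suc p) 1" for p
    using simplex_bounds[OF assms] by (metis le_antisym)
  then have "delta1_min r w \<longleftrightarrow> (\<exists>p<r. w p 1 = w (Suc p) 1)"
    by (auto simp: delta1_min_def degenerate_def)
  moreover have "\<exists>p<r. w p 1 = w (Suc p) 1" if "2 \<le> r"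
  proof (cases "w 0 1 = w 1 1")
    case False
    then have "w 1 1" using simplex_mono[OF assms, of 0 1 1] that by auto
    then have "w 2 1" using simplex_mono[OF assms, of 1 2 1] that by auto
    then show ?thesis using \<open>w 1 1\<close> that by (intro exI[of _ 1]) (simp add: numeral_2_eq_2)
  qed (use that in \<open>auto intro!: exI[of _ 0]\<close>)
  moreover have "r < 2 \<Longrightarrow> (\<exists>p<r. w p 1 = w (Suc p) 1) \<longleftrightarrow> r = 1 \<and> w 0 1 = w 1 1"
    by (auto simp: less_2_cases_iff)
  ultimately show ?thesis by (cases "2 \<le> r") auto
qed

lemma delta1_min_restr_right_part:
  assumes "simplex (m + 1) r v" "i \<le> r"
  shows "delta1_min (r - i) (restr i r (right_part m v)) \<longleftrightarrow>
           i + 2 \<le> r \<or> (i + 1 = r \<and> \<not> jumps_at v (m + 1) r)"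
proof -
  have "v i (m + 1) \<Longrightarrow> v r (m + 1)" using simplex_mono[OF assms(1)] assms(2) by blast
  moreover have "i + 2 \<le> r \<longleftrightarrow> 2 \<le> r - i" "i + 1 = r \<longleftrightarrow> r - i = 1" using assms(2) by auto
  ultimately show ?thesis
    using delta1_min_iff[OF simplex_restr_right_part[OF assms]]
    by (auto simp: restr_def right_part_def jumps_at_def)
qed

lemma gray_pow_iff_not_jump_chain:
  "simplex N r v \<Longrightarrow> gray_pow N r v \<longleftrightarrow> \<not> jump_chain (jumps_at v) 0 N 0 r"
proof (induction N arbitrary: r v)
  case (Suc k)
  let ?J = "jumps_at v"
  have "simplex (k + 1) r v" using Suc.prems by simp
  have "gray_pow (Suc k) r v \<longleftrightarrow>
        (\<forall>i\<le>r. \<not> jump_chain ?J 0 k 0 i \<or> i + 2 \<le> r \<or> (i + 1 = r \<and> \<not> ?J (k + 1) r))"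
    using Suc.IH[OF simplex_restr_left_part[OF \<open>simplex (k + 1) r v\<close>]]
      delta1_min_restr_right_part[OF \<open>simplex (k + 1) r v\<close>]
    by (auto simp: gray_def jump_chain_restr_left_part)
  also have "\<dots> \<longleftrightarrow> \<not> (\<exists>i\<le>r. jump_chain ?J 0 k 0 i \<and> r < i + 2 \<and> (i + 1 = r \<longrightarrow> ?J (Suc k) r))"
    by auto
  finally show ?case by (simp only: jump_chain_Suc_from_zero)
qed auto

lemma all_splits_blocked_iff:
  assumes chain: "jump_chain J 0 N 0 r" and "1 \<le> m" "m \<le> N"
  shows "(\<forall>i\<le>r. \<not> jump_chain J 0 m 0 i \<or> (i = m \<and> (\<forall>j\<in>{1..m}. J j j)) \<or> \<not> jump_chain J m N i r)
         \<longleftrightarrow> m \<le> r \<and> (\<forall>j\<in>{1..m}. J j j) \<and> \<not> jump_chain J m N (m - 1) r"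
    (is "(\<forall>i\<le>r. ?blocked i) \<longleftrightarrow> _")
proof
  assume blocked: "\<forall>i\<le>r. ?blocked i"
  obtain k where "k \<le> r" "jump_chain J 0 m 0 k" "jump_chain J m N k r"
    using jump_chain_split[OF chain _ \<open>m \<le> N\<close>] by auto
  with blocked have "m \<le> r" and diagonal: "\<forall>j\<in>{1..m}. J j j" by auto
  have "jump_chain J 0 m 0 (m - 1)"
    using jump_chain_diagonal[of "m - 1" J] diagonal by (auto intro: jump_chain_mono_upper)
  moreover have "m - 1 \<le> r" "m - 1 \<noteq> m" using \<open>m \<le> r\<close> \<open>1 \<le> m\<close> by auto
  ultimately have "\<not> jump_chain J m N (m - 1) r" using blocked by blast
  with \<open>m \<le> r\<close> diagonal show "m \<le> r \<and> (\<forall>j\<in>{1..m}. J j j) \<and> \<not> jump_chain J m N (m - 1) r" by blast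
next
  assume "m \<le> r \<and> (\<forall>j\<in>{1..m}. J j j) \<and> \<not> jump_chain J m N (m - 1) r"
  then have diagonal: "\<forall>j\<in>{1..m}. J j j" and no_chain: "\<not> jump_chain J m N (m - 1) r" by auto
  show "\<forall>i\<le>r. ?blocked i"
  proof (intro allI impI)
    fix i assume "i \<le> r"
    show "?blocked i"
    proof (cases "jump_chain J 0 m 0 i")
      case True
      then have "i \<le> m" using jump_chain_length by fastforce
      then consider "i = m" | "i \<le> m - 1" by linarith
      then show ?thesis
      proof cases
        case 2
        then have "\<not> jump_chain J m N i r" using no_chain jump_chain_mono_lower by blast
        then show ?thesis by simp
      qed (use diagonal in simp)
    qed simp
  qed
qed

lemma eq_iota_iff:
  assumes "simplex m m w"
  shows "w = iota m \<longleftrightarrow> (\<forall>j\<in>{1..m}. jumps_at w j j)"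
proof
  assume diagonal: "\<forall>j\<in>{1..m}. jumps_at w j j"
  show "w = iota m"
  proof (intro ext iffI)
    fix p j assume "w p j"
    moreover have "j \<le> p"
    proof (rule ccontr)
      assume "\<not> j \<le> p"
      moreover have "j - 1 \<le> m" using simplex_bounds[OF assms \<open>w p j\<close>] by linarith
      ultimately have "w (j - 1) j" using simplex_mono[OF assms _ _ \<open>w p j\<close>] by simp
      with diagonal show False using simplex_bounds[OF assms \<open>w p j\<close>] by (auto simp: jumps_at_def)
    qed
    ultimately show "iota m p j" using simplex_bounds[OF assms] by (simp add: iota_def)
  next
    fix p j assume "iota m p j"
    then show "w p j"
      using diagonal simplex_mono[OF assms, of j p j] by (auto simp: iota_def jumps_at_def)
  qed
qed (auto simp: iota_def jumps_at_def)

lemma gray_pow_e_restr_left_part_iff: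
  assumes "simplex (m + n) r v" "i \<le> r"
  shows "gray_pow_e m i (restr 0 i (left_part m v)) \<longleftrightarrow>
           \<not> jump_chain (jumps_at v) 0 m 0 i \<or> (i = m \<and> (\<forall>j\<in>{1..m}. jumps_at v j j))"
proof -
  have simplex: "simplex m i (restr 0 i (left_part m v))"
    by (rule simplex_restr_left_part[OF assms])
  have "restr 0 m (left_part m v) = iota m \<longleftrightarrow> (\<forall>j\<in>{1..m}. jumps_at v j j)" if "i = m"
    using eq_iota_iff[of m "restr 0 m (left_part m v)"] simplex that
    by (auto simp: jumps_at_def restr_def left_part_def)
  then show ?thesis
    using gray_pow_iff_not_jump_chain[OF simplex]
    by (auto simp: gray_pow_e_def jump_chain_restr_left_part)
qed

lemma gray_gray_pow_e_gray_pow_iff: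
  assumes "simplex (m + n) r v"
  shows "gray (gray_pow_e m) m (gray_pow n) r v \<longleftrightarrow>
    (\<forall>i\<le>r. \<not> jump_chain (jumps_at v) 0 m 0 i \<or> (i = m \<and> (\<forall>j\<in>{1..m}. jumps_at v j j))
           \<or> \<not> jump_chain (jumps_at v) m (m + n) i r)"
  using gray_pow_e_restr_left_part_iff[OF assms]
    gray_pow_iff_not_jump_chain[OF simplex_restr_right_part[OF assms]]
  by (auto simp: gray_def jump_chain_restr_right_part)

lemma exists_phi_seq_iff_jump_chain:
  assumes "simplex (m + n) r v" "1 \<le> m" "m \<le> r"
  shows "(\<exists>s :: nat \<Rightarrow> nat. m < s m \<and> s r \<le> m + n \<and>
            (\<forall>p q. m \<le> p \<and> p < q \<and> q \<le> r \<longrightarrow> s p < s q) \<and>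
            (\<forall>p\<in>{m..r}. phi r v (s p) = Fin p))
         \<longleftrightarrow> jump_chain (jumps_at v) m (m + n) (m - 1) r"
proof -
  have "phi r v (s p) = Fin p \<longleftrightarrow> jumps_at v (s p) p" if "p \<in> {m..r}" for s p
    using phi_eq_Fin_iff[OF assms(1)] that assms(2) by auto
  then show ?thesis
    using jump_chain_iff_seq[of "m - 1" r "jumps_at v" m "m + n"] assms(2,3)
    by (auto simp: strict_mono_on_def)
qed

theorem lemma6p5:
  fixes m n r :: nat and v :: "nat \<Rightarrow> nat \<Rightarrow> bool"
  assumes "1 \<le> m"
    and "simplex (m + n) r v"
    and "\<not> gray_pow (m + n) r v"
  shows "gray (gray_pow_e m) m (gray_pow n) r v \<longleftrightarrow>
           (m \<le> r \<and>
            (\<forall>i\<in>{1..m}. phi r v i = Fin i) \<and>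
            \<not> (\<exists>s :: nat \<Rightarrow> nat.
                  m < s m \<and> s r \<le> m + n \<and>
                  (\<forall>p q. m \<le> p \<and> p < q \<and> q \<le> r \<longrightarrow> s p < s q) \<and>
                  (\<forall>p\<in>{m..r}. phi r v (s p) = Fin p)))"
proof -
  let ?J = "jumps_at v"
  have chain: "jump_chain ?J 0 (m + n) 0 r"
    using gray_pow_iff_not_jump_chain[OF assms(2)] assms(3) by simp
  have "gray (gray_pow_e m) m (gray_pow n) r v \<longleftrightarrow>
    (\<forall>i\<le>r. \<not> jump_chain ?J 0 m 0 i \<or> (i = m \<and> (\<forall>j\<in>{1..m}. ?J j j)) \<or> \<not> jump_chain ?J m (m + n) i r)"
    by (rule gray_gray_pow_e_gray_pow_iff[OF assms(2)])
  also have "\<dots> \<longleftrightarrow> m \<le> r \<and> (\<forall>j\<in>{1..m}. ?J j j) \<and> \<not> jump_chain ?J m (m + n) (m - 1) r"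
    by (rule all_splits_blocked_iff[OF chain assms(1)]) simp
  also have "\<dots> \<longleftrightarrow> m \<le> r \<and> (\<forall>i\<in>{1..m}. phi r v i = Fin i) \<and> \<not> jump_chain ?J m (m + n) (m - 1) r"
    using phi_eq_Fin_iff[OF assms(2)] by (intro conj_cong refl ball_cong) auto
  finally show ?thesis using exists_phi_seq_iff_jump_chain[OF assms(2,1)] by blast
qed

end
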